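(* For every boosted instance $I=(G,t,t^* )$ and every boost action $B=(q,\tau)$ with $\tau\ge t^*_q$, $\mathrm{Win}(I,B)\ge 0$.
   Context: $G=(V,E,c)$ is an undirected graph with edge costs $c\ge0$; $\delta(S)$ denotes the edges with exactly one endpoint in $S$. Shadow moat growing on $(G,s)$, for $s:V\to\mathbb{R}_{\ge0}$: continuous process in time $\tau\ge0$ maintaining a forest (initially empty), its components, and $y_S\ge0$ (initially $0$); at time $\tau$ a component $C$ is active iff some $w\in C$ has $s_w>\tau$, and each active $C$ increases $y_C$ at rate $1$; an edge $e$ between different components with $\sum_{S:e\in\delta(S)}y_S=c_e$ is added and the components merge (ties processed by a fixed rule); stop when nothing is active. A boosted instance is $I=(G,t,t^* )$ with $t,t^*:V\to\mathbb{R}_{\ge0}$ and $t^*_v\ge t_v$ for all $v$. Run shadow moat growing on $(G,t^* )$; at each moment $\tau$, each active component $C$ contributes its growth to $y_{\mathrm{base}}$ if some $w\in C$ has $t_w>\tau$, and to $y_{\mathrm{add}}$ otherwise; so $y_{\mathrm{base}}+y_{\mathrm{add}}=\sum_S y_S$. A boost action $B=(q,\tau)$ with $\tau\ge t^*_q$ yields $\mathrm{WithBoost}(I,B)=(G,t,t^{*\prime})$ where $t^{*\prime}_q=\tau$ and $t^{*\prime}_v=t^*_v$ otherwise. If $(y_{\mathrm{base}},y_{\mathrm{add}})$ and $(y'_{\mathrm{base}},y'_{\mathrm{add}})$ are these quantities for $I$ and $\mathrm{WithBoost}(I,B)$, then $\mathrm{Win}(I,B)=y_{\mathrm{base}}-y'_{\mathrm{base}}$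 and $\mathrm{Loss}(I,B)=y'_{\mathrm{add}}-y_{\mathrm{add}}$. *)

theory Defs
  imports Complex_Main
begin

text \<open>Graph: finite vertex set V, edges E given as 2-element vertex sets, costs c.
  Shadow moat growing is simulated event by event (phases between consecutive
  merge/deactivation events).\<close>

record 'v mstate =
  time :: real
  comps :: "'v set set"
  yv :: "'v set \<Rightarrow> real"
  ybase :: real
  yadd :: real

definition graph_ok :: "'v set \<Rightarrow> 'v set set \<Rightarrow> ('v set \<Rightarrow> real) \<Rightarrow> bool" where
  "graph_ok V E c \<longleftrightarrow> finite V \<and> (\<forall>e\<in>E. e \<subseteq> V \<and> card e = 2) \<and> (\<forall>e\<in>E. c e \<ge> 0)"

definition boosted_instance ::
  "'v set \<Rightarrow> 'v set set \<Rightarrow> ('v set \<Rightarrow> real) \<Rightarrow> ('v \<Rightarrow> real) \<Rightarrow> ('v \<Rightarrow> real) \<Rightarrow> bool" where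
  "boosted_instance V E c t ts \<longleftrightarrow> graph_ok V E c \<and> (\<forall>v\<in>V. 0 \<le> t v \<and> t v \<le> ts v)"

definition delta :: "'v set set \<Rightarrow> 'v set \<Rightarrow> 'v set set" where
  "delta E S = {e\<in>E. card (e \<inter> S) = 1}"

text \<open>Load of an edge: sum of y_S over S with e in delta(S) (y is zero outside subsets of V).\<close>
definition load :: "'v set \<Rightarrow> 'v set set \<Rightarrow> ('v set \<Rightarrow> real) \<Rightarrow> 'v set \<Rightarrow> real" where
  "load V E y e = (\<Sum>S\<in>Pow V. if e \<in> delta E S then y S else 0)"

definition is_active :: "('v \<Rightarrow> real) \<Rightarrow> real \<Rightarrow> 'v set \<Rightarrow> bool" where
  "is_active s \<tau> C \<longleftrightarrow> (\<exists>w\<in>C. s w > \<tau>)"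

definition crossing :: "'v set set \<Rightarrow> 'v set \<Rightarrow> bool" where
  "crossing P e \<longleftrightarrow> \<not> (\<exists>C\<in>P. e \<subseteq> C)"

definition tight_edges ::
  "'v set \<Rightarrow> 'v set set \<Rightarrow> ('v set \<Rightarrow> real) \<Rightarrow> 'v set set \<Rightarrow> ('v set \<Rightarrow> real) \<Rightarrow> 'v set set" where
  "tight_edges V E c P y = {e\<in>E. crossing P e \<and> load V E y e = c e}"

definition merge :: "'v set \<Rightarrow> 'v set set \<Rightarrow> 'v set set \<Rightarrow> 'v set set" where
  "merge V P T =
     (let R = {(a,b). \<exists>C\<in>P. a \<in> C \<and> b \<in> C} \<union> {(a,b). {a,b} \<in> T}
      in (\<lambda>u. {w\<in>V. (u,w) \<in> R\<^sup>*}) ` V)"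

text \<open>Number of active components containing an endpoint of e (growth rate of its load).\<close>
definition rate :: "('v \<Rightarrow> real) \<Rightarrow> real \<Rightarrow> 'v set set \<Rightarrow> 'v set \<Rightarrow> nat" where
  "rate s \<tau> P e = card {C\<in>P. is_active s \<tau> C \<and> e \<inter> C \<noteq> {}}"

text \<open>One phase of shadow moat growing on (G,s); the base/add split uses t.\<close>
definition mg_step ::
  "'v set \<Rightarrow> 'v set set \<Rightarrow> ('v set \<Rightarrow> real) \<Rightarrow> ('v \<Rightarrow> real) \<Rightarrow> ('v \<Rightarrow> real)
    \<Rightarrow> 'v mstate \<Rightarrow> 'v mstate" where
  "mg_step V E c s t st =
    (let \<tau> = time st; P = comps st; y = yv st;
         A = {C\<in>P. is_active s \<tau> C}
     in if A = {} then st else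
       (let ET = {(c e - load V E y e) / real (rate s \<tau> P e) | e.
                     e \<in> E \<and> crossing P e \<and> rate s \<tau> P e > 0};
            DT = {Max (s ` C) - \<tau> | C. C \<in> A};
            \<Delta> = Min (ET \<union> DT);
            y' = (\<lambda>S. if S \<in> A then y S + \<Delta> else y S);
            bc = (\<Sum>C\<in>A. min \<Delta> (max 0 (Max (t ` C) - \<tau>)))
        in \<lparr>time = \<tau> + \<Delta>, comps = merge V P (tight_edges V E c P y'), yv = y',
            ybase = ybase st + bc, yadd = yadd st + real (card A) * \<Delta> - bc\<rparr>))"

definition mg_init :: "'v set \<Rightarrow> 'v set set \<Rightarrow> ('v set \<Rightarrow> real) \<Rightarrow> 'v mstate" where
  "mg_init V E c =
    (let P0 = (\<lambda>v. {v}) ` V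
     in \<lparr>time = 0, comps = merge V P0 (tight_edges V E c P0 (\<lambda>_. 0)), yv = (\<lambda>_. 0),
         ybase = 0, yadd = 0\<rparr>)"

text \<open>The process has at most 2|V| phases (potential #components + #active components
  strictly decreases each phase), and stopped states are fixed points of mg_step,
  so iterating 4|V|+4 times yields the final state.\<close>
definition mg_run ::
  "'v set \<Rightarrow> 'v set set \<Rightarrow> ('v set \<Rightarrow> real) \<Rightarrow> ('v \<Rightarrow> real) \<Rightarrow> ('v \<Rightarrow> real) \<Rightarrow> 'v mstate" where
  "mg_run V E c t ts = (mg_step V E c ts t ^^ (4 * card V + 4)) (mg_init V E c)"

definition y_base :: "'v set \<Rightarrow> 'v set set \<Rightarrow> ('v set \<Rightarrow> real) \<Rightarrow> ('v \<Rightarrow> real) \<Rightarrow> ('v \<Rightarrow> real) \<Rightarrow> real" where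
  "y_base V E c t ts = ybase (mg_run V E c t ts)"

definition y_add :: "'v set \<Rightarrow> 'v set set \<Rightarrow> ('v set \<Rightarrow> real) \<Rightarrow> ('v \<Rightarrow> real) \<Rightarrow> ('v \<Rightarrow> real) \<Rightarrow> real" where
  "y_add V E c t ts = yadd (mg_run V E c t ts)"

definition with_boost :: "('v \<Rightarrow> real) \<Rightarrow> 'v \<Rightarrow> real \<Rightarrow> ('v \<Rightarrow> real)" where
  "with_boost ts q \<tau> = ts(q := \<tau>)"

definition Win ::
  "'v set \<Rightarrow> 'v set set \<Rightarrow> ('v set \<Rightarrow> real) \<Rightarrow> ('v \<Rightarrow> real) \<Rightarrow> ('v \<Rightarrow> real) \<Rightarrow> 'v \<Rightarrow> real \<Rightarrow> real" where
  "Win V E c t ts q \<tau> = y_base V E c t ts - y_base V E c t (with_boost ts q \<tau>)"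

definition Loss ::
  "'v set \<Rightarrow> 'v set set \<Rightarrow> ('v set \<Rightarrow> real) \<Rightarrow> ('v \<Rightarrow> real) \<Rightarrow> ('v \<Rightarrow> real) \<Rightarrow> 'v \<Rightarrow> real \<Rightarrow> real" where
  "Loss V E c t ts q \<tau> = y_add V E c t (with_boost ts q \<tau>) - y_add V E c t ts"

end

(*
  Boosting only prolongs activity, so at every moment the boosted run has grown at least as
  much moat around every edge as the original run: its edge loads dominate, and hence its
  partition into components is coarser.  The base part grows at every moment by the number of
  components containing a vertex w with t_w still ahead; such components are active in both
  runs, and a coarser partition has fewer of them.  The two event-driven runs are compared at
  common times by always advancing the one whose current phase ends first.
*)
theory Submission
  imports Defs "HOL-Library.Disjoint_Sets"
begin

lemma partition_on_blockE:
  assumes "partition_on A P" "x \<in> A"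
  obtains C where "C \<in> P" "x \<in> C"
  using assms unfolding partition_on_def by blast

lemma partition_on_block_eq:
  assumes "partition_on A P" "C \<in> P" "D \<in> P" "x \<in> C" "x \<in> D"
  shows "C = D"
proof (rule ccontr)
  assume "C \<noteq> D"
  then have "C \<inter> D = {}" using disjointD[OF partition_onD2[OF assms(1)] assms(2,3)] by blast
  then show False using assms(4,5) by blast
qed

lemma partition_on_block_subset: "partition_on A P \<Longrightarrow> C \<in> P \<Longrightarrow> C \<subseteq> A"
  unfolding partition_on_def by blast

lemma partition_on_block_nonempty: "partition_on A P \<Longrightarrow> C \<in> P \<Longrightarrow> C \<noteq> {}"
  unfolding partition_on_def by blast

lemma partition_on_block_finite:
  assumes "finite A" "partition_on A P" "C \<in> P"
  shows "finite C"
  using finite_subset[OF partition_on_block_subset[OF assms(2,3)] assms(1)] .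

lemma refinesD1: "refines A P Q \<Longrightarrow> partition_on A P"
  and refinesD2: "refines A P Q \<Longrightarrow> partition_on A Q"
  unfolding refines_def by blast+

lemma refines_blockE:
  assumes "refines A P Q" "C \<in> P"
  obtains D where "D \<in> Q" "C \<subseteq> D"
  using assms unfolding refines_def by blast

lemma refines_crossing:
  assumes "refines A P Q" "crossing Q e"
  shows "crossing P e"
  unfolding crossing_def
proof
  assume "\<exists>C\<in>P. e \<subseteq> C"
  then obtain C D where "C \<in> P" "e \<subseteq> C" "D \<in> Q" "C \<subseteq> D"
    using refines_blockE[OF assms(1)] by metis
  then show False using assms(2) unfolding crossing_def by blast
qed

lemma refines_eq_image:
  assumes "refines A P Q"
  shows "\<exists>f. Q = f ` P \<and> (\<forall>C\<in>P. C \<subseteq> f C)"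
proof -
  have P: "partition_on A P" and Q: "partition_on A Q"
    using assms by (rule refinesD1, rule refinesD2)
  have "\<forall>C\<in>P. \<exists>D. D \<in> Q \<and> C \<subseteq> D" using assms by (auto simp: refines_def)
  then obtain f where f: "\<And>C. C \<in> P \<Longrightarrow> f C \<in> Q \<and> C \<subseteq> f C"
    by (metis bchoice)
  have "D \<in> f ` P" if D: "D \<in> Q" for D
  proof -
    obtain x where x: "x \<in> D" using partition_on_block_nonempty[OF Q D] by auto
    have "x \<in> A" using partition_on_block_subset[OF Q D] x by (rule subsetD)
    then obtain C where C: "C \<in> P" "x \<in> C" by (rule partition_on_blockE[OF P])
    have "x \<in> f C" using f[OF C(1)] C(2) by auto
    then have "f C = D" using partition_on_block_eq[OF Q _ D _ x] f[OF C(1)] by auto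
    then show ?thesis using C(1) by auto
  qed
  then have "Q = f ` P" using f by auto
  moreover have "\<forall>C\<in>P. C \<subseteq> f C" using f by auto
  ultimately show ?thesis by (intro exI[of _ f] conjI)
qed

lemma refines_card_le:
  assumes "finite A" "refines A P Q"
  shows "card Q \<le> card P"
proof -
  obtain f where "Q = f ` P" using refines_eq_image[OF assms(2)] by blast
  then show ?thesis using card_image_le[OF finite_elements[OF assms(1) refinesD1[OF assms(2)]]] by simp
qed

lemma refines_card_less:
  assumes "finite A" "refines A P Q"
    and "C1 \<in> P" "C2 \<in> P" "C1 \<noteq> C2" "D \<in> Q" "C1 \<subseteq> D" "C2 \<subseteq> D"
  shows "card Q < card P"
proof -
  obtain f where Q: "Q = f ` P" and f: "\<And>C. C \<in> P \<Longrightarrow> C \<subseteq> f C"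
    using refines_eq_image[OF assms(2)] by blast
  have "f C = D" if C: "C \<in> P" "C \<subseteq> D" for C
  proof -
    obtain x where x: "x \<in> C" using partition_on_block_nonempty[OF refinesD1[OF assms(2)] C(1)] by blast
    have "f C \<in> Q" using Q C(1) by blast
    with x f[OF C(1)] C(2) show ?thesis
      using partition_on_block_eq[OF refinesD2[OF assms(2)] _ assms(6)] by blast
  qed
  then have "\<not> inj_on f P" using assms(3-5,7,8) unfolding inj_on_def by metis
  moreover have "finite P" using finite_elements[OF assms(1) refinesD1[OF assms(2)]] .
  ultimately have "card (f ` P) \<noteq> card P" using inj_on_iff_eq_card by blast
  then show ?thesis unfolding Q using card_image_le[OF \<open>finite P\<close>, of f] by linarith
qed

lemma inj_on_nonempty_subblock:
  assumes "partition_on A Q" "Q' \<subseteq> Q" "\<And>D. D \<in> Q' \<Longrightarrow> h D \<subseteq> D \<and> h D \<noteq> {}"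
  shows "inj_on h Q'"
proof (rule inj_onI)
  fix D1 D2 assume D: "D1 \<in> Q'" "D2 \<in> Q'" "h D1 = h D2"
  obtain x where "x \<in> h D1" using assms(3)[OF D(1)] by auto
  then have "x \<in> D1" "x \<in> D2" using assms(3)[OF D(1)] assms(3)[OF D(2)] D(3) by auto
  then show "D1 = D2" using partition_on_block_eq[OF assms(1)] D(1,2) assms(2) by auto
qed

lemma card_le_if_contains_block:
  assumes "partition_on A Q" "Q' \<subseteq> Q" "finite P'" "{} \<notin> P'"
    and "\<And>D. D \<in> Q' \<Longrightarrow> \<exists>C\<in>P'. C \<subseteq> D"
  shows "card Q' \<le> card P'"
proof -
  obtain h where h: "\<And>D. D \<in> Q' \<Longrightarrow> h D \<in> P' \<and> h D \<subseteq> D"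
    using assms(5) by metis
  have "inj_on h Q'"
    using h assms(4) by (intro inj_on_nonempty_subblock[OF assms(1,2)]) fastforce
  moreover have "h ` Q' \<subseteq> P'" using h by auto
  ultimately show ?thesis using card_inj_on_le[OF _ _ assms(3)] by blast
qed

lemma card_partition_on_le:
  assumes "finite A" "partition_on A P"
  shows "card P \<le> card A"
proof -
  have "card P \<le> card ((\<lambda>x. {x}) ` A)"
  proof (rule card_le_if_contains_block[OF assms(2) order.refl])
    fix D assume "D \<in> P"
    then obtain x where "x \<in> D" using partition_on_block_nonempty[OF assms(2)] by blast
    then show "\<exists>C\<in>(\<lambda>x. {x}) ` A. C \<subseteq> D"
      using partition_on_block_subset[OF assms(2) \<open>D \<in> P\<close>] by auto
  qed (use assms(1) in auto)
  also have "\<dots> \<le> card A" using card_image_le[OF assms(1)] .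
  finally show ?thesis .
qed

lemma sum_refines_le:
  fixes g :: "'a set \<Rightarrow> 'b::ordered_comm_monoid_add"
  assumes "finite A" "refines A P Q" and "\<And>C. C \<in> P \<Longrightarrow> 0 \<le> g C"
    and "\<And>D. D \<in> Q \<Longrightarrow> \<exists>C\<in>P. C \<subseteq> D \<and> g D \<le> g C"
  shows "sum g Q \<le> sum g P"
proof -
  have P: "partition_on A P" and Q: "partition_on A Q"
    using assms(2) by (rule refinesD1, rule refinesD2)
  obtain h where h: "\<And>D. D \<in> Q \<Longrightarrow> h D \<in> P \<and> h D \<subseteq> D \<and> g D \<le> g (h D)"
    using assms(4) by metis
  have "inj_on h Q"
    using h partition_on_block_nonempty[OF P] by (intro inj_on_nonempty_subblock[OF Q]) auto
  have "sum g Q \<le> sum (g \<circ> h) Q" using h by (intro sum_mono) auto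
  also have "\<dots> = sum g (h ` Q)" by (simp add: sum.reindex[OF \<open>inj_on h Q\<close>])
  also have "\<dots> \<le> sum g P"
    using h assms(3) finite_elements[OF assms(1) P] by (intro sum_mono2) auto
  finally show ?thesis .
qed

definition merge_rel :: "'v set set \<Rightarrow> 'v set set \<Rightarrow> ('v \<times> 'v) set" where
  "merge_rel P T = {(a, b). \<exists>C\<in>P. a \<in> C \<and> b \<in> C} \<union> {(a, b). {a, b} \<in> T}"

definition merge_block :: "'v set \<Rightarrow> 'v set set \<Rightarrow> 'v set set \<Rightarrow> 'v \<Rightarrow> 'v set" where
  "merge_block V P T u = {w \<in> V. (u, w) \<in> (merge_rel P T)\<^sup>*}"

lemma merge_eq_image: "merge V P T = merge_block V P T ` V"
  unfolding merge_def merge_block_def merge_rel_def Let_def by simp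

lemma merge_blockI: "u \<in> V \<Longrightarrow> merge_block V P T u \<in> merge V P T"
  unfolding merge_eq_image by (rule imageI)

lemma merge_rel_sym: "sym (merge_rel P T)"
  unfolding sym_def merge_rel_def by (auto simp: insert_commute)

lemma partition_on_merge: "partition_on V (merge V P T)"
proof -
  define r where "r = {(u, w). u \<in> V \<and> w \<in> V \<and> (u, w) \<in> (merge_rel P T)\<^sup>*}"
  have "equiv V r"
  proof (rule equivI)
    show "sym r"
      unfolding r_def sym_def using symD[OF sym_rtrancl[OF merge_rel_sym]] by auto
    show "trans r" unfolding r_def trans_def by (auto intro: rtrancl_trans)
  qed (auto simp: r_def refl_on_def)
  moreover have "merge V P T = V // r"
    unfolding merge_eq_image quotient_def merge_block_def r_def by auto
  ultimately show ?thesis using partition_on_quotient by simp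
qed

lemma refines_merge:
  assumes P: "partition_on V P"
  shows "refines V P (merge V P T)"
  unfolding refines_def
proof (intro conjI ballI P partition_on_merge)
  fix C assume C: "C \<in> P"
  obtain u where u: "u \<in> C" using partition_on_block_nonempty[OF P C] by blast
  have CV: "C \<subseteq> V" using partition_on_block_subset[OF P C] .
  have "C \<subseteq> merge_block V P T u"
  proof
    fix w assume w: "w \<in> C"
    have "(u, w) \<in> merge_rel P T" unfolding merge_rel_def using C u w by blast
    then show "w \<in> merge_block V P T u" unfolding merge_block_def using CV w by auto
  qed
  moreover have "merge_block V P T u \<in> merge V P T" using u CV by (intro merge_blockI) blast
  ultimately show "\<exists>D\<in>merge V P T. C \<subseteq> D" by (rule bexI)
qed

lemma merge_refines:
  assumes PQ: "refines V P Q" and T: "\<And>e. e \<in> T \<Longrightarrow> \<exists>D\<in>Q. e \<subseteq> D"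
  shows "refines V (merge V P T) Q"
  unfolding refines_def
proof (intro conjI ballI partition_on_merge refinesD2[OF PQ])
  have Q: "partition_on V Q" using refinesD2[OF PQ] .
  fix X assume "X \<in> merge V P T"
  then obtain u where u: "u \<in> V" and X: "X = merge_block V P T u"
    unfolding merge_eq_image by blast
  obtain D where D: "D \<in> Q" "u \<in> D" using partition_on_blockE[OF Q u] .
  have "w \<in> D" if "(u, w) \<in> (merge_rel P T)\<^sup>*" for w
    using that
  proof (induction rule: rtrancl_induct)
    case (step y z)
    obtain D' where D': "D' \<in> Q" "y \<in> D'" "z \<in> D'"
    proof (cases "{y, z} \<in> T")
      case True
      then show ?thesis using T that by blast
    next
      case False
      then obtain C where C: "C \<in> P" "y \<in> C" "z \<in> C"
        using step.hyps(2) unfolding merge_rel_def by blast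
      obtain D' where "D' \<in> Q" "C \<subseteq> D'" using refines_blockE[OF PQ C(1)] .
      then show ?thesis using C that by blast
    qed
    have "D' = D" using partition_on_block_eq[OF Q D'(1) D(1) D'(2) step.IH] .
    then show ?case using D'(3) by simp
  qed (use D in simp)
  then show "\<exists>D\<in>Q. X \<subseteq> D" using D X unfolding merge_block_def by blast
qed

lemma merge_edge_not_crossing:
  assumes "{a, b} \<in> T" "a \<in> V" "b \<in> V"
  shows "\<not> crossing (merge V P T) {a, b}"
proof -
  have "(a, b) \<in> merge_rel P T" using assms(1) unfolding merge_rel_def by simp
  then have "{a, b} \<subseteq> merge_block V P T a"
    using assms(2,3) unfolding merge_block_def by auto
  then show ?thesis using merge_blockI[OF assms(2)] unfolding crossing_def by auto
qed

lemma card_merge_le: "finite V \<Longrightarrow> partition_on V P \<Longrightarrow> card (merge V P T) \<le> card P"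
  by (rule refines_card_le[OF _ refines_merge])

lemma card_merge_less:
  assumes V: "finite V" and P: "partition_on V P"
    and ab: "{a, b} \<in> T" "a \<in> V" "b \<in> V" and cross: "crossing P {a, b}"
  shows "card (merge V P T) < card P"
proof -
  have R: "refines V P (merge V P T)" by (rule refines_merge[OF P])
  obtain C1 where C1: "C1 \<in> P" "a \<in> C1" using partition_on_blockE[OF P ab(2)] .
  obtain C2 where C2: "C2 \<in> P" "b \<in> C2" using partition_on_blockE[OF P ab(3)] .
  have "C1 \<noteq> C2" using C1 C2 cross unfolding crossing_def by auto
  obtain D where D: "D \<in> merge V P T" "a \<in> D" "b \<in> D"
    using merge_edge_not_crossing[OF ab] unfolding crossing_def by auto
  have "C \<subseteq> D" if C: "C \<in> P" "x \<in> C" "x \<in> D" for C x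
  proof -
    obtain D' where D': "D' \<in> merge V P T" "C \<subseteq> D'" using refines_blockE[OF R C(1)] .
    have "D' = D" using partition_on_block_eq[OF partition_on_merge D'(1) D(1)] D'(2) C(2,3) by auto
    then show ?thesis using D'(2) by simp
  qed
  then have "C1 \<subseteq> D" "C2 \<subseteq> D" using C1 C2 D by auto
  then show ?thesis using refines_card_less[OF V R C1(1) C2(1) \<open>C1 \<noteq> C2\<close> D(1)] by simp
qed

locale moat_growing =
  fixes V :: "'v set" and E :: "'v set set" and c :: "'v set \<Rightarrow> real" and t :: "'v \<Rightarrow> real"
  assumes graph: "graph_ok V E c"
begin

lemma finite_V: "finite V"
  using graph unfolding graph_ok_def by simp

lemma edge_subset: "e \<in> E \<Longrightarrow> e \<subseteq> V"
  using graph unfolding graph_ok_def by simp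

lemma cost_nonneg: "e \<in> E \<Longrightarrow> 0 \<le> c e"
  using graph unfolding graph_ok_def by simp

lemma finite_E: "finite E"
  using finite_subset[of E "Pow V"] finite_V edge_subset by auto

lemma edge_pairE:
  assumes "e \<in> E"
  obtains a b where "e = {a, b}" "a \<noteq> b" "a \<in> V" "b \<in> V"
proof -
  have "card e = 2" using graph assms unfolding graph_ok_def by simp
  then obtain a b where "e = {a, b}" "a \<noteq> b" by (meson card_2_iff)
  then show ?thesis using that edge_subset[OF assms] by simp
qed

lemma crossing_merge:
  assumes "partition_on V P" "e \<in> E" "crossing (merge V P T) e"
  shows "crossing P e" "e \<notin> T"
proof -
  show "crossing P e" using refines_crossing[OF refines_merge[OF assms(1)] assms(3)] .
  obtain a b where "e = {a, b}" "a \<in> V" "b \<in> V" using edge_pairE[OF assms(2)] by blast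
  then show "e \<notin> T" using merge_edge_not_crossing[of a b T V P] assms(3) by auto
qed

definition active_comps :: "('v \<Rightarrow> real) \<Rightarrow> 'v mstate \<Rightarrow> 'v set set" where
  "active_comps s st = {C \<in> comps st. is_active s (time st) C}"

definition edge_events :: "('v \<Rightarrow> real) \<Rightarrow> 'v mstate \<Rightarrow> real set" where
  "edge_events s st = {(c e - load V E (yv st) e) / real (rate s (time st) (comps st) e) | e.
     e \<in> E \<and> crossing (comps st) e \<and> rate s (time st) (comps st) e > 0}"

definition deactivation_events :: "('v \<Rightarrow> real) \<Rightarrow> 'v mstate \<Rightarrow> real set" where
  "deactivation_events s st = {Max (s ` C) - time st | C. C \<in> active_comps s st}"

definition phase_length :: "('v \<Rightarrow> real) \<Rightarrow> 'v mstate \<Rightarrow> real" where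
  "phase_length s st = Min (edge_events s st \<union> deactivation_events s st)"

definition grown_y :: "('v \<Rightarrow> real) \<Rightarrow> 'v mstate \<Rightarrow> 'v set \<Rightarrow> real" where
  "grown_y s st = (\<lambda>S. if S \<in> active_comps s st then yv st S + phase_length s st else yv st S)"

abbreviation step :: "('v \<Rightarrow> real) \<Rightarrow> 'v mstate \<Rightarrow> 'v mstate" where
  "step s \<equiv> mg_step V E c s t"

lemma step_inactive: "active_comps s st = {} \<Longrightarrow> step s st = st"
  unfolding mg_step_def active_comps_def Let_def by simp

lemma step_active:
  assumes "active_comps s st \<noteq> {}"
  shows "time (step s st) = time st + phase_length s st"
    and "comps (step s st) = merge V (comps st) (tight_edges V E c (comps st) (grown_y s st))"
    and "yv (step s st) = grown_y s st"
    and "ybase (step s st) = ybase st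
           + (\<Sum>C\<in>active_comps s st. min (phase_length s st) (max 0 (Max (t ` C) - time st)))"
proof -
  have ne: "{C \<in> comps st. is_active s (time st) C} \<noteq> {}"
    using assms unfolding active_comps_def .
  show "time (step s st) = time st + phase_length s st"
    and "comps (step s st) = merge V (comps st) (tight_edges V E c (comps st) (grown_y s st))"
    and "yv (step s st) = grown_y s st"
    and "ybase (step s st) = ybase st
           + (\<Sum>C\<in>active_comps s st. min (phase_length s st) (max 0 (Max (t ` C) - time st)))"
    unfolding mg_step_def active_comps_def Let_def phase_length_def edge_events_def
      deactivation_events_def grown_y_def if_not_P[OF ne]
    by simp_all
qed

definition valid :: "'v mstate \<Rightarrow> bool" where
  "valid st \<longleftrightarrow> partition_on V (comps st)
     \<and> (\<forall>e\<in>E. crossing (comps st) e \<longrightarrow> load V E (yv st) e < c e)"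

lemma valid_partition: "valid st \<Longrightarrow> partition_on V (comps st)"
  unfolding valid_def by simp

lemma valid_load_less: "valid st \<Longrightarrow> e \<in> E \<Longrightarrow> crossing (comps st) e \<Longrightarrow> load V E (yv st) e < c e"
  unfolding valid_def by simp

lemma load_grow:
  assumes P: "partition_on V P" and e: "e \<in> E" "crossing P e"
    and A: "A = {C \<in> P. is_active s \<tau> C}"
  shows "load V E (\<lambda>S. if S \<in> A then y S + d else y S) e = load V E y e + d * real (rate s \<tau> P e)"
proof -
  have split: "(if e \<in> delta E S then (if S \<in> A then y S + d else y S) else 0)
      = (if e \<in> delta E S then y S else 0) + (if e \<in> delta E S \<and> S \<in> A then d else 0)" for S
    by auto
  have "load V E (\<lambda>S. if S \<in> A then y S + d else y S) e
      = load V E y e + (\<Sum>S\<in>{S \<in> Pow V. e \<in> delta E S \<and> S \<in> A}. d)"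
    unfolding load_def split sum.distrib using sum.inter_filter[of "Pow V" "\<lambda>_. d"] finite_V
    by simp
  also have "{S \<in> Pow V. e \<in> delta E S \<and> S \<in> A} = {C \<in> P. is_active s \<tau> C \<and> e \<inter> C \<noteq> {}}"
  proof -
    obtain a b where ab: "e = {a, b}" "a \<noteq> b" using edge_pairE[OF e(1)] by blast
    have "card (e \<inter> C) = 1 \<longleftrightarrow> e \<inter> C \<noteq> {}" if "C \<in> P" for C
    proof -
      have "\<not> (a \<in> C \<and> b \<in> C)" using e(2) that ab unfolding crossing_def by auto
      then show ?thesis using ab by (cases "a \<in> C"; cases "b \<in> C") auto
    qed
    moreover have "A \<subseteq> Pow V" using A partition_on_block_subset[OF P] by auto
    ultimately show ?thesis using A e(1) unfolding delta_def by auto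
  qed
  finally show ?thesis unfolding rate_def by (simp add: mult.commute)
qed

lemma load_step:
  assumes "valid st" "active_comps s st \<noteq> {}" "e \<in> E" "crossing (comps st) e"
  shows "load V E (yv (step s st)) e
    = load V E (yv st) e + phase_length s st * real (rate s (time st) (comps st) e)"
  unfolding step_active(3)[OF assms(2)] grown_y_def
  using load_grow[OF valid_partition[OF assms(1)] assms(3,4) active_comps_def] by simp

lemma active_compD:
  assumes "valid st" "C \<in> active_comps s st"
  shows "C \<in> comps st" "finite C" "C \<noteq> {}" "C \<subseteq> V" "time st < Max (s ` C)"
proof -
  show C: "C \<in> comps st" using assms(2) unfolding active_comps_def by simp
  note P = valid_partition[OF assms(1)]
  show "finite C" using partition_on_block_finite[OF finite_V P C] .
  show "C \<noteq> {}" "C \<subseteq> V" using partition_on_block_nonempty[OF P C] partition_on_block_subset[OF P C] .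
  obtain w where "w \<in> C" "time st < s w" using assms(2) unfolding active_comps_def is_active_def by auto
  moreover have "s w \<le> Max (s ` C)" using \<open>finite C\<close> \<open>w \<in> C\<close> by (intro Max_ge) auto
  ultimately show "time st < Max (s ` C)" by linarith
qed

lemma finite_active_comps: "valid st \<Longrightarrow> finite (active_comps s st)"
  using finite_elements[OF finite_V valid_partition] unfolding active_comps_def by simp

lemma finite_events: "valid st \<Longrightarrow> finite (edge_events s st \<union> deactivation_events s st)"
proof -
  assume "valid st"
  have "finite {e. e \<in> E \<and> crossing (comps st) e \<and> rate s (time st) (comps st) e > 0}"
    using finite_E by (rule finite_subset[rotated]) auto
  then have "finite (edge_events s st)" unfolding edge_events_def by (rule finite_image_set)
  moreover have "finite (deactivation_events s st)"
    using finite_active_comps[OF \<open>valid st\<close>] unfolding deactivation_events_def by simp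
  ultimately show ?thesis by simp
qed

lemma phase_length_le:
  "valid st \<Longrightarrow> x \<in> edge_events s st \<union> deactivation_events s st \<Longrightarrow> phase_length s st \<le> x"
  unfolding phase_length_def using finite_events by (intro Min_le)

lemma phase_length_mem:
  assumes "valid st" "active_comps s st \<noteq> {}"
  shows "phase_length s st \<in> edge_events s st \<union> deactivation_events s st"
  unfolding phase_length_def
  using assms(2) by (intro Min_in finite_events[OF assms(1)]) (auto simp: deactivation_events_def)

lemma phase_length_le_slack:
  assumes "valid st" "e \<in> E" "crossing (comps st) e" "rate s (time st) (comps st) e > 0"
  shows "phase_length s st * real (rate s (time st) (comps st) e) \<le> c e - load V E (yv st) e"
proof -
  have "phase_length s st \<le> (c e - load V E (yv st) e) / real (rate s (time st) (comps st) e)"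
    using assms by (intro phase_length_le) (auto simp: edge_events_def)
  then show ?thesis using assms(4) by (simp add: pos_le_divide_eq)
qed

lemma phase_end_le_deactivation:
  assumes "valid st" "C \<in> active_comps s st"
  shows "time st + phase_length s st \<le> Max (s ` C)"
proof -
  have "Max (s ` C) - time st \<in> deactivation_events s st"
    using assms(2) unfolding deactivation_events_def by blast
  then show ?thesis using phase_length_le[OF assms(1)] by fastforce
qed

lemma phase_length_pos:
  assumes "valid st" "active_comps s st \<noteq> {}"
  shows "0 < phase_length s st"
  using phase_length_mem[OF assms]
proof
  assume "phase_length s st \<in> edge_events s st"
  then show ?thesis
    using valid_load_less[OF assms(1)] unfolding edge_events_def by auto
next
  assume "phase_length s st \<in> deactivation_events s st"
  then show ?thesis
    using active_compD(5)[OF assms(1)] unfolding deactivation_events_def by auto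
qed

lemma time_le_step:
  assumes "valid st"
  shows "time st \<le> time (step s st)"
proof (cases "active_comps s st = {}")
  case False
  then show ?thesis using phase_length_pos[OF assms False] step_active(1)[OF False] by simp
qed (simp add: step_inactive)

lemma valid_step:
  assumes "valid st"
  shows "valid (step s st)"
proof (cases "active_comps s st = {}")
  case True
  then show ?thesis using assms by (simp add: step_inactive)
next
  case False
  note P = valid_partition[OF assms]
  define T where "T = tight_edges V E c (comps st) (grown_y s st)"
  have comps': "comps (step s st) = merge V (comps st) T"
    unfolding T_def by (rule step_active(2)[OF False])
  have "load V E (yv (step s st)) e < c e" if e: "e \<in> E" "crossing (comps (step s st)) e" for e
  proof -
    have cr: "crossing (comps st) e" and "e \<notin> T"
      using crossing_merge[OF P e(1) e(2)[unfolded comps']] by simp_all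
    then have "load V E (yv (step s st)) e \<noteq> c e"
      using e(1) cr step_active(3)[OF False] unfolding T_def tight_edges_def by auto
    moreover have "load V E (yv (step s st)) e \<le> c e"
      using load_step[OF assms False e(1) cr] valid_load_less[OF assms e(1) cr]
        phase_length_le_slack[OF assms e(1) cr, of s]
      by (cases "rate s (time st) (comps st) e > 0") auto
    ultimately show ?thesis by linarith
  qed
  then show ?thesis unfolding valid_def comps' using partition_on_merge by auto
qed

lemma valid_init: "valid (mg_init V E c)"
proof -
  define P0 where "P0 = (\<lambda>v. {v}) ` V"
  define T0 where "T0 = tight_edges V E c P0 (\<lambda>_. 0)"
  have comps0: "comps (mg_init V E c) = merge V P0 T0" and y0: "yv (mg_init V E c) = (\<lambda>_. 0)"
    unfolding mg_init_def P0_def T0_def Let_def by simp_all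
  have load0: "load V E (\<lambda>_. 0) e = 0" for e unfolding load_def by simp
  have P0: "partition_on V P0" unfolding P0_def by (rule partition_on_singletons)
  have "load V E (yv (mg_init V E c)) e < c e" if e: "e \<in> E" "crossing (comps (mg_init V E c)) e" for e
  proof -
    have cr: "crossing P0 e" and "e \<notin> T0"
      using crossing_merge[OF P0 e(1) e(2)[unfolded comps0]] by simp_all
    then have "c e \<noteq> 0" using e(1) cr load0 unfolding T0_def tight_edges_def by auto
    then show ?thesis using cost_nonneg[OF e(1)] y0 load0 by simp
  qed
  then show ?thesis unfolding valid_def comps0 using partition_on_merge by auto
qed

definition run :: "('v \<Rightarrow> real) \<Rightarrow> nat \<Rightarrow> 'v mstate" where
  "run s m = (step s ^^ m) (mg_init V E c)"

lemma run_0: "run s 0 = mg_init V E c"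
  unfolding run_def by simp

lemma run_Suc: "run s (Suc m) = step s (run s m)"
  unfolding run_def by simp

lemma valid_run: "valid (run s m)"
  by (induction m) (simp_all add: run_0 run_Suc valid_init valid_step)

lemma run_stopped: "active_comps s (run s n) = {} \<Longrightarrow> run s (n + k) = run s n"
  by (induction k) (simp_all add: run_Suc step_inactive)

definition potential :: "('v \<Rightarrow> real) \<Rightarrow> 'v mstate \<Rightarrow> nat" where
  "potential s st = card (comps st) + card (active_comps s st)"

lemma card_active_step_le:
  assumes W: "valid st" and A: "active_comps s st \<noteq> {}"
  shows "card (active_comps s (step s st))
    \<le> card {C \<in> active_comps s st. is_active s (time (step s st)) C}"
proof (rule card_le_if_contains_block[OF valid_partition[OF valid_step[OF W]]])
  note P = valid_partition[OF W]
  have R: "refines V (comps st) (comps (step s st))"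
    unfolding step_active(2)[OF A] by (rule refines_merge[OF P])
  show "active_comps s (step s st) \<subseteq> comps (step s st)" unfolding active_comps_def by auto
  show "finite {C \<in> active_comps s st. is_active s (time (step s st)) C}"
    using finite_active_comps[OF W] by simp
  show "{} \<notin> {C \<in> active_comps s st. is_active s (time (step s st)) C}"
    unfolding is_active_def by blast
  fix D assume D: "D \<in> active_comps s (step s st)"
  then obtain w where w: "w \<in> D" "time (step s st) < s w"
    unfolding active_comps_def is_active_def by auto
  have DQ: "D \<in> comps (step s st)" using D unfolding active_comps_def by simp
  have "w \<in> V" using partition_on_block_subset[OF refinesD2[OF R] DQ] w(1) by auto
  then obtain C where C: "C \<in> comps st" "w \<in> C" using partition_on_blockE[OF P] by blast
  obtain D' where D': "D' \<in> comps (step s st)" "C \<subseteq> D'" using refines_blockE[OF R C(1)] .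
  have "D' = D" using partition_on_block_eq[OF refinesD2[OF R] D'(1) DQ] D'(2) C(2) w(1) by auto
  moreover have "time st < s w" using w(2) time_le_step[OF W, of s] by linarith
  ultimately show "\<exists>C\<in>{C \<in> active_comps s st. is_active s (time (step s st)) C}. C \<subseteq> D"
    using C D'(2) w(2) unfolding active_comps_def is_active_def by auto
qed

text \<open>A phase ends either with an edge becoming tight, which merges two components, or with an
  active component becoming inactive.\<close>
lemma potential_step_less:
  assumes W: "valid st" and A: "active_comps s st \<noteq> {}"
  shows "potential s (step s st) < potential s st"
proof -
  note P = valid_partition[OF W]
  define T where "T = tight_edges V E c (comps st) (grown_y s st)"
  define \<tau>' where "\<tau>' = time (step s st)"
  have comps': "comps (step s st) = merge V (comps st) T"
    unfolding T_def by (rule step_active(2)[OF A])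
  have active_le: "card (active_comps s (step s st)) \<le> card {C \<in> active_comps s st. is_active s \<tau>' C}"
    unfolding \<tau>'_def by (rule card_active_step_le[OF W A])
  have still_active_le: "card {C \<in> active_comps s st. is_active s \<tau>' C} \<le> card (active_comps s st)"
    using finite_active_comps[OF W] by (intro card_mono) auto
  from phase_length_mem[OF W A] show ?thesis
  proof
    assume "phase_length s st \<in> edge_events s st"
    then obtain e where e: "e \<in> E" "crossing (comps st) e" "rate s (time st) (comps st) e > 0"
      and len: "phase_length s st = (c e - load V E (yv st) e) / real (rate s (time st) (comps st) e)"
      unfolding edge_events_def by auto
    obtain a b where ab: "e = {a, b}" "a \<in> V" "b \<in> V" using edge_pairE[OF e(1)] by blast
    have "load V E (yv (step s st)) e = c e" using load_step[OF W A e(1,2)] len e(3) by simp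
    then have "e \<in> T" using e(1,2) step_active(3)[OF A] unfolding T_def tight_edges_def by auto
    then have "card (merge V (comps st) T) < card (comps st)"
      using card_merge_less[OF finite_V P _ ab(2,3)] ab(1) e(2) by simp
    then show ?thesis unfolding potential_def comps' using active_le still_active_le by linarith
  next
    assume "phase_length s st \<in> deactivation_events s st"
    then obtain C0 where C0: "C0 \<in> active_comps s st" "phase_length s st = Max (s ` C0) - time st"
      unfolding deactivation_events_def by auto
    have "\<not> is_active s \<tau>' C0"
    proof
      assume "is_active s \<tau>' C0"
      then obtain w where w: "w \<in> C0" "\<tau>' < s w" unfolding is_active_def by auto
      have "s w \<le> Max (s ` C0)" using active_compD(2)[OF W C0(1)] w(1) by (intro Max_ge) auto
      then show False using w(2) C0(2) step_active(1)[OF A] unfolding \<tau>'_def by linarith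
    qed
    then have "{C \<in> active_comps s st. is_active s \<tau>' C} \<subset> active_comps s st" using C0(1) by auto
    then have "card {C \<in> active_comps s st. is_active s \<tau>' C} < card (active_comps s st)"
      using finite_active_comps[OF W] psubset_card_mono by auto
    then show ?thesis
      unfolding potential_def comps' using active_le card_merge_le[OF finite_V P, of T] by linarith
  qed
qed

lemma run_terminates_aux: "active_comps s (run s m) = {} \<or> potential s (run s m) + m \<le> 2 * card V"
proof (induction m)
  case 0
  note P = valid_partition[OF valid_run[of s 0]]
  have "card (active_comps s (run s 0)) \<le> card (comps (run s 0))"
    using finite_elements[OF finite_V P] by (intro card_mono) (auto simp: active_comps_def)
  then show ?case using card_partition_on_le[OF finite_V P] unfolding potential_def by simp
next
  case (Suc m)
  show ?case
  proof (cases "active_comps s (run s m) = {}")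
    case True
    then show ?thesis by (simp add: run_Suc step_inactive)
  next
    case False
    then have "potential s (run s (Suc m)) < potential s (run s m)"
      unfolding run_Suc by (rule potential_step_less[OF valid_run])
    then show ?thesis using Suc.IH False by simp
  qed
qed

lemma run_terminates:
  assumes "2 * card V < m"
  shows "active_comps s (run s m) = {}"
proof -
  define n where "n = Suc (2 * card V)"
  have stop: "active_comps s (run s n) = {}" using run_terminates_aux[of s n] unfolding n_def by auto
  have "run s m = run s n" using run_stopped[OF stop, of "m - n"] assms unfolding n_def by simp
  then show ?thesis using stop by simp
qed

text \<open>Values the current phase would produce if it lasted until time \<open>T\<close>; \<open>base_gain \<tau> T C\<close> is
  the time in \<open>[\<tau>, T]\<close> during which \<open>C\<close> contains a vertex \<open>w\<close> with \<open>t w\<close> still ahead.\<close>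
definition load_at :: "('v \<Rightarrow> real) \<Rightarrow> 'v mstate \<Rightarrow> real \<Rightarrow> 'v set \<Rightarrow> real" where
  "load_at s st T e = load V E (yv st) e + (T - time st) * real (rate s (time st) (comps st) e)"

definition base_gain :: "real \<Rightarrow> real \<Rightarrow> 'v set \<Rightarrow> real" where
  "base_gain \<tau> T C = max 0 (min T (Max (t ` C)) - \<tau>)"

definition base_at :: "'v mstate \<Rightarrow> real \<Rightarrow> real" where
  "base_at st T = ybase st + (\<Sum>C\<in>comps st. base_gain (time st) T C)"

lemma base_gain_nonneg: "0 \<le> base_gain \<tau> T C"
  unfolding base_gain_def by simp

lemma base_at_time: "base_at st (time st) = ybase st"
proof -
  have "base_gain (time st) (time st) C = 0" for C unfolding base_gain_def by (simp add: max_def min_def)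
  then show ?thesis unfolding base_at_def by simp
qed

lemma base_at_add:
  assumes "time st \<le> T" "T \<le> T2"
  shows "base_at st T2 = base_at st T + (\<Sum>C\<in>comps st. base_gain T T2 C)"
proof -
  have "base_gain (time st) T2 C = base_gain (time st) T C + base_gain T T2 C" for C
    using assms unfolding base_gain_def by (simp add: max_def min_def)
  then show ?thesis unfolding base_at_def by (simp add: sum.distrib)
qed

lemma base_at_mono:
  assumes "time st \<le> T" "T \<le> T2"
  shows "base_at st T \<le> base_at st T2"
  using base_at_add[OF assms] sum_nonneg[of "comps st" "base_gain T T2"] base_gain_nonneg by simp

context
  fixes s :: "'v \<Rightarrow> real"
  assumes t_le: "\<forall>v\<in>V. t v \<le> s v"
begin

lemma base_gain_inactive:
  assumes W: "valid st" and C: "C \<in> comps st" "\<not> is_active s (time st) C"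
  shows "base_gain (time st) T C = 0"
proof -
  note P = valid_partition[OF W]
  have fin: "finite C" and ne: "C \<noteq> {}" and CV: "C \<subseteq> V"
    using partition_on_block_finite[OF finite_V P C(1)] partition_on_block_nonempty[OF P C(1)]
      partition_on_block_subset[OF P C(1)] .
  have "Max (t ` C) \<in> t ` C" using fin ne by (intro Max_in) auto
  then obtain w where w: "w \<in> C" "Max (t ` C) = t w" by auto
  have "s w \<le> time st" using C(2) w(1) unfolding is_active_def by auto
  then have "Max (t ` C) \<le> time st" using t_le w CV by fastforce
  then show ?thesis unfolding base_gain_def by (simp add: max_def min_def)
qed

lemma base_at_stopped:
  assumes "valid st" "active_comps s st = {}"
  shows "base_at st T = ybase st"
proof -
  have "base_gain (time st) T C = 0" if "C \<in> comps st" for C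
    using base_gain_inactive[OF assms(1) that] assms(2) that unfolding active_comps_def by auto
  then show ?thesis unfolding base_at_def by simp
qed

lemma ybase_step:
  assumes W: "valid st" and A: "active_comps s st \<noteq> {}"
  shows "ybase (step s st) = base_at st (time (step s st))"
proof -
  have len: "0 < phase_length s st" using phase_length_pos[OF W A] .
  have time': "time (step s st) = time st + phase_length s st" using step_active(1)[OF A] .
  have gain: "min (phase_length s st) (max 0 (Max (t ` C) - time st))
      = base_gain (time st) (time (step s st)) C" for C
    unfolding time' base_gain_def using len by (simp add: max_def min_def)
  have "(\<Sum>C\<in>comps st. base_gain (time st) (time (step s st)) C)
      = (\<Sum>C\<in>active_comps s st. base_gain (time st) (time (step s st)) C)"
    using base_gain_inactive[OF W] finite_elements[OF finite_V valid_partition[OF W]]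
    by (intro sum.mono_neutral_right) (auto simp: active_comps_def)
  then show ?thesis unfolding base_at_def step_active(4)[OF A] gain by simp
qed

end

lemma ybase_step_mono:
  assumes "valid st"
  shows "ybase st \<le> ybase (step s st)"
proof (cases "active_comps s st = {}")
  case False
  have "0 \<le> (\<Sum>C\<in>active_comps s st. min (phase_length s st) (max 0 (Max (t ` C) - time st)))"
    using phase_length_pos[OF assms False] by (intro sum_nonneg) simp
  then show ?thesis using step_active(4)[OF False] by simp
qed (simp add: step_inactive)

lemma ybase_run_mono: "m \<le> n \<Longrightarrow> ybase (run s m) \<le> ybase (run s n)"
proof (induction n rule: dec_induct)
  case (step n)
  then show ?case using ybase_step_mono[OF valid_run, of s n s] by (simp add: run_Suc)
qed simp

lemma ybase_run_le_final:
  assumes "2 * card V < N"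
  shows "ybase (run s k) \<le> ybase (run s N)"
proof (cases "k \<le> N")
  case False
  then have "run s k = run s N" using run_stopped[OF run_terminates[OF assms, of s], of "k - N"] by simp
  then show ?thesis by simp
qed (rule ybase_run_mono)

lemma load_at_time: "load_at s st (time st) e = load V E (yv st) e"
  unfolding load_at_def by simp

lemma load_at_step:
  assumes "valid st" "active_comps s st \<noteq> {}" "e \<in> E" "crossing (comps st) e"
  shows "load V E (yv (step s st)) e = load_at s st (time (step s st)) e"
  unfolding load_at_def using load_step[OF assms] step_active(1)[OF assms(2)] by simp

lemma load_at_add:
  "load_at s st T2 e = load_at s st T e + (T2 - T) * real (rate s (time st) (comps st) e)"
  unfolding load_at_def by (simp add: algebra_simps)

lemma rate_stopped:
  assumes "active_comps s st = {}"
  shows "rate s (time st) (comps st) e = 0"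
proof -
  have "{C \<in> comps st. is_active s (time st) C \<and> e \<inter> C \<noteq> {}} = {}"
    using assms unfolding active_comps_def by auto
  then show ?thesis unfolding rate_def by (metis card.empty)
qed

lemma load_at_less_cost:
  assumes W: "valid st" and e: "e \<in> E" "crossing (comps st) e" and T: "time st \<le> T"
    and before: "active_comps s st = {} \<or> T < time (step s st)"
  shows "load_at s st T e < c e"
proof (cases "rate s (time st) (comps st) e > 0")
  case True
  then have A: "active_comps s st \<noteq> {}" using rate_stopped by fastforce
  then have "T - time st < phase_length s st" using before step_active(1)[OF A] by auto
  then have "(T - time st) * real (rate s (time st) (comps st) e)
      < phase_length s st * real (rate s (time st) (comps st) e)"
    using True by (intro mult_strict_right_mono) auto
  then show ?thesis using phase_length_le_slack[OF W e True] unfolding load_at_def by linarith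
next
  case False
  then show ?thesis using valid_load_less[OF W e] unfolding load_at_def by simp
qed

lemma base_gain_sum_refines_le:
  assumes R: "refines V P Q"
  shows "(\<Sum>D\<in>Q. base_gain T T2 D) \<le> (\<Sum>C\<in>P. base_gain T T2 C)"
proof (rule sum_refines_le[OF finite_V R])
  show "0 \<le> base_gain T T2 C" for C by (rule base_gain_nonneg)
next
  note P = refinesD1[OF R] and Q = refinesD2[OF R]
  fix D assume D: "D \<in> Q"
  have "Max (t ` D) \<in> t ` D"
    using partition_on_block_finite[OF finite_V Q D] partition_on_block_nonempty[OF Q D]
    by (intro Max_in) auto
  then obtain w where w: "w \<in> D" "Max (t ` D) = t w" by auto
  have "w \<in> V" using partition_on_block_subset[OF Q D] w(1) by auto
  then obtain C where C: "C \<in> P" "w \<in> C" using partition_on_blockE[OF P] by blast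
  obtain D' where D': "D' \<in> Q" "C \<subseteq> D'" using refines_blockE[OF R C(1)] .
  have "D' = D" using partition_on_block_eq[OF Q D'(1) D] D'(2) C(2) w(1) by auto
  moreover have "t w \<le> Max (t ` C)"
    using partition_on_block_finite[OF finite_V P C(1)] C(2) by (intro Max_ge) auto
  then have "base_gain T T2 D \<le> base_gain T T2 C"
    unfolding base_gain_def w(2) by (simp add: max_def min_def)
  ultimately show "\<exists>C\<in>P. C \<subseteq> D \<and> base_gain T T2 D \<le> base_gain T T2 C" using C(1) D'(2) by auto
qed

text \<open>Injectivity uses that \<open>e\<close> still crosses the coarser partition: the blocks of \<open>P\<close> meeting
  \<open>e\<close> at different endpoints lie in different blocks of \<open>Q\<close>.\<close>
lemma rate_refines_le:
  assumes R: "refines V P Q" and e: "e \<in> E" "crossing Q e"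
    and act: "\<And>C. C \<in> P \<Longrightarrow> is_active s \<tau> C \<Longrightarrow> is_active s' \<tau>' C"
  shows "rate s \<tau> P e \<le> rate s' \<tau>' Q e"
proof -
  note P = refinesD1[OF R]
  define S where "S = {C \<in> P. is_active s \<tau> C \<and> e \<inter> C \<noteq> {}}"
  define S' where "S' = {D \<in> Q. is_active s' \<tau>' D \<and> e \<inter> D \<noteq> {}}"
  obtain f where f: "\<And>C. C \<in> P \<Longrightarrow> f C \<in> Q \<and> C \<subseteq> f C"
    using R unfolding refines_def by metis
  obtain a b where ab: "e = {a, b}" using edge_pairE[OF e(1)] by blast
  have "inj_on f S"
  proof (rule inj_onI)
    fix C1 C2 assume C: "C1 \<in> S" "C2 \<in> S" "f C1 = f C2"
    have CP: "C1 \<in> P" "C2 \<in> P" using C unfolding S_def by auto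
    have not_both: "\<not> (a \<in> f C1 \<and> b \<in> f C1)" using e(2) f[OF CP(1)] ab unfolding crossing_def by auto
    obtain x where "x \<in> e" "x \<in> C1" "x \<in> C2"
      using C not_both f[OF CP(1)] f[OF CP(2)] ab unfolding S_def by blast
    then show "C1 = C2" using partition_on_block_eq[OF P CP] by blast
  qed
  moreover have "f ` S \<subseteq> S'"
  proof
    fix D assume "D \<in> f ` S"
    then obtain C where C: "C \<in> S" "D = f C" by auto
    have CP: "C \<in> P" using C(1) unfolding S_def by auto
    have "is_active s' \<tau>' C" using act[OF CP] C(1) unfolding S_def by auto
    then have "is_active s' \<tau>' D" using f[OF CP] C(2) unfolding is_active_def by auto
    moreover have "e \<inter> D \<noteq> {}" using C f[OF CP] unfolding S_def by auto
    ultimately show "D \<in> S'" using f[OF CP] C(2) unfolding S'_def by auto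
  qed
  moreover have "finite S'" using finite_elements[OF finite_V refinesD2[OF R]] unfolding S'_def by auto
  ultimately have "card S \<le> card S'" by (rule card_inj_on_le)
  then show ?thesis unfolding rate_def S_def S'_def .
qed

definition phase_covers :: "('v \<Rightarrow> real) \<Rightarrow> 'v mstate \<Rightarrow> real \<Rightarrow> bool" where
  "phase_covers s st T \<longleftrightarrow> active_comps s st = {} \<or> T \<le> time (step s st)"

definition dominated_at ::
  "('v \<Rightarrow> real) \<Rightarrow> ('v \<Rightarrow> real) \<Rightarrow> 'v mstate \<Rightarrow> 'v mstate \<Rightarrow> real \<Rightarrow> bool" where
  "dominated_at s s' a b T \<longleftrightarrow> refines V (comps a) (comps b)
     \<and> (\<forall>e\<in>E. crossing (comps b) e \<longrightarrow> load_at s a T e \<le> load_at s' b T e)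
     \<and> base_at b T \<le> base_at a T"

text \<open>Invariant of the simulation of the run under \<open>s\<close> by the run under the pointwise larger
  \<open>s'\<close>, compared at the later of the start times of their current phases \<open>a\<close> and \<open>b\<close>.\<close>
definition synced :: "('v \<Rightarrow> real) \<Rightarrow> ('v \<Rightarrow> real) \<Rightarrow> 'v mstate \<Rightarrow> 'v mstate \<Rightarrow> bool" where
  "synced s s' a b \<longleftrightarrow> phase_covers s a (max (time a) (time b))
     \<and> phase_covers s' b (max (time a) (time b)) \<and> dominated_at s s' a b (max (time a) (time b))"

lemma synced_init: "synced s s' (mg_init V E c) (mg_init V E c)"
  unfolding synced_def phase_covers_def dominated_at_def
  using time_le_step[OF valid_init] refines_refl[OF valid_partition[OF valid_init]]
  by (simp add: load_at_def)

context
  fixes s s' :: "'v \<Rightarrow> real"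
  assumes t_le: "\<forall>v\<in>V. t v \<le> s v" and s_le: "\<forall>v\<in>V. s v \<le> s' v"
begin

lemma active_until_phase_end:
  assumes W: "valid a" and C: "C \<in> active_comps s a" and \<tau>: "\<tau> < time (step s a)"
  shows "is_active s' \<tau> C"
proof -
  have A: "active_comps s a \<noteq> {}" using C by auto
  have "\<tau> < Max (s ` C)"
    using phase_end_le_deactivation[OF W C] \<tau> step_active(1)[OF A] by linarith
  moreover have "Max (s ` C) \<in> s ` C" using active_compD(2,3)[OF W C] by (intro Max_in) auto
  then obtain w where "w \<in> C" "s w = Max (s ` C)" by auto
  moreover have "w \<in> V" using active_compD(4)[OF W C] \<open>w \<in> C\<close> by auto
  ultimately show ?thesis using s_le unfolding is_active_def by force
qed

lemma load_at_le_later: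
  assumes W: "valid a" "valid b" and R: "refines V (comps a) (comps b)"
    and e: "e \<in> E" "crossing (comps b) e" and T: "time b \<le> T" "T \<le> T2"
    and covers: "phase_covers s a T2" and le: "load_at s a T e \<le> load_at s' b T e"
  shows "load_at s a T2 e \<le> load_at s' b T2 e"
proof (cases "T = T2")
  case False
  have "rate s (time a) (comps a) e \<le> rate s' (time b) (comps b) e"
  proof (cases "active_comps s a = {}")
    case False
    then have "time b < time (step s a)" using covers T \<open>T \<noteq> T2\<close> unfolding phase_covers_def by auto
    then show ?thesis
      using active_until_phase_end[OF W(1)] by (intro rate_refines_le[OF R e]) (auto simp: active_comps_def)
  qed (simp add: rate_stopped)
  then have "(T2 - T) * real (rate s (time a) (comps a) e) \<le> (T2 - T) * real (rate s' (time b) (comps b) e)"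
    using T by (intro mult_left_mono) auto
  then show ?thesis using le load_at_add[of s a T2 e T] load_at_add[of s' b T2 e T] by linarith
qed (use le in simp)

lemma dominated_at_later:
  assumes W: "valid a" "valid b" and D: "dominated_at s s' a b T"
    and T: "time a \<le> T" "time b \<le> T" "T \<le> T2" and covers: "phase_covers s a T2"
  shows "dominated_at s s' a b T2"
proof -
  have R: "refines V (comps a) (comps b)" using D unfolding dominated_at_def by simp
  have "base_at b T2 = base_at b T + (\<Sum>C\<in>comps b. base_gain T T2 C)" using base_at_add[OF T(2,3)] .
  also have "\<dots> \<le> base_at a T + (\<Sum>C\<in>comps a. base_gain T T2 C)"
    using D base_gain_sum_refines_le[OF R] unfolding dominated_at_def by (intro add_mono) auto
  also have "\<dots> = base_at a T2" using base_at_add[OF T(1,3)] by simp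
  finally show ?thesis
    using D load_at_le_later[OF W R _ _ T(2,3) covers] unfolding dominated_at_def by auto
qed

lemma t_le_boosted: "\<forall>v\<in>V. t v \<le> s' v"
  using t_le s_le by force

lemma dominated_at_step_boosted:
  assumes W: "valid b" and A: "active_comps s' b \<noteq> {}"
    and D: "dominated_at s s' a b (time (step s' b))"
  shows "dominated_at s s' a (step s' b) (time (step s' b))"
  unfolding dominated_at_def
proof (intro conjI ballI impI)
  have R': "refines V (comps b) (comps (step s' b))"
    unfolding step_active(2)[OF A] by (rule refines_merge[OF valid_partition[OF W]])
  show "refines V (comps a) (comps (step s' b))"
    using refines_trans[OF _ R', of "comps a"] D unfolding dominated_at_def by simp
  fix e assume e: "e \<in> E" "crossing (comps (step s' b)) e"
  have crb: "crossing (comps b) e" using refines_crossing[OF R' e(2)] .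
  have "load_at s' (step s' b) (time (step s' b)) e = load_at s' b (time (step s' b)) e"
    unfolding load_at_time using load_at_step[OF W A e(1) crb] .
  then show "load_at s a (time (step s' b)) e \<le> load_at s' (step s' b) (time (step s' b)) e"
    using D e(1) crb unfolding dominated_at_def by auto
next
  have "base_at (step s' b) (time (step s' b)) = base_at b (time (step s' b))"
    unfolding base_at_time by (rule ybase_step[OF t_le_boosted W A])
  then show "base_at (step s' b) (time (step s' b)) \<le> base_at a (time (step s' b))"
    using D unfolding dominated_at_def by simp
qed

text \<open>The merges of the \<open>s\<close>-run stay inside the blocks of the \<open>s'\<close>-run: a tight edge crossing a
  block of \<open>b\<close> would be at least as loaded in \<open>b\<close>, contradicting that \<open>b\<close>'s phase is not over.\<close>
lemma dominated_at_step_base: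
  assumes W: "valid a" "valid b" and A: "active_comps s a \<noteq> {}"
    and D: "dominated_at s s' a b (time (step s a))" and T: "time b \<le> time (step s a)"
    and before: "active_comps s' b = {} \<or> time (step s a) < time (step s' b)"
  shows "dominated_at s s' (step s a) b (time (step s a))"
proof -
  define T' where "T' = tight_edges V E c (comps a) (grown_y s a)"
  have R: "refines V (comps a) (comps b)" using D unfolding dominated_at_def by simp
  have "\<exists>D\<in>comps b. e \<subseteq> D" if e: "e \<in> T'" for e
  proof (rule ccontr)
    assume "\<not> (\<exists>D\<in>comps b. e \<subseteq> D)"
    then have crb: "crossing (comps b) e" unfolding crossing_def by auto
    have eE: "e \<in> E" and cra: "crossing (comps a) e" and tight: "load V E (grown_y s a) e = c e"
      using e unfolding T'_def tight_edges_def by auto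
    have "c e = load_at s a (time (step s a)) e"
      using tight load_at_step[OF W(1) A eE cra] step_active(3)[OF A] by simp
    also have "\<dots> \<le> load_at s' b (time (step s a)) e" using D eE crb unfolding dominated_at_def by auto
    also have "\<dots> < c e" using load_at_less_cost[OF W(2) eE crb T before] .
    finally show False by simp
  qed
  then have "refines V (comps (step s a)) (comps b)"
    unfolding step_active(2)[OF A] T'_def[symmetric] by (rule merge_refines[OF R])
  moreover have "load_at s (step s a) (time (step s a)) e \<le> load_at s' b (time (step s a)) e"
    if "e \<in> E" "crossing (comps b) e" for e
    using load_at_step[OF W(1) A that(1) refines_crossing[OF R that(2)]] D that
    unfolding load_at_time dominated_at_def by auto
  moreover have "base_at b (time (step s a)) \<le> base_at (step s a) (time (step s a))"
    using D ybase_step[OF t_le W(1) A] unfolding dominated_at_def base_at_time by simp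
  ultimately show ?thesis unfolding dominated_at_def by auto
qed

lemma synced_step_boosted:
  assumes W: "valid a" "valid b" and S: "synced s s' a b" and A: "active_comps s' b \<noteq> {}"
    and covers: "phase_covers s a (time (step s' b))"
  shows "synced s s' a (step s' b)"
proof -
  have T2: "max (time a) (time b) \<le> time (step s' b)"
    using S A unfolding synced_def phase_covers_def by auto
  have "dominated_at s s' a b (max (time a) (time b))" using S unfolding synced_def by simp
  then have "dominated_at s s' a b (time (step s' b))"
    using dominated_at_later[OF W _ _ _ T2 covers] by simp
  then have "dominated_at s s' a (step s' b) (time (step s' b))"
    by (rule dominated_at_step_boosted[OF W(2) A])
  moreover have "phase_covers s' (step s' b) (time (step s' b))"
    using time_le_step[OF valid_step[OF W(2)]] unfolding phase_covers_def by auto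
  moreover have "max (time a) (time (step s' b)) = time (step s' b)" using T2 by auto
  ultimately show ?thesis using covers unfolding synced_def by simp
qed

lemma synced_step_base:
  assumes W: "valid a" "valid b" and S: "synced s s' a b" and A: "active_comps s a \<noteq> {}"
    and before: "active_comps s' b = {} \<or> time (step s a) < time (step s' b)"
  shows "synced s s' (step s a) b"
proof -
  have T2: "max (time a) (time b) \<le> time (step s a)"
    using S A unfolding synced_def phase_covers_def by auto
  have covers: "phase_covers s a (time (step s a))" unfolding phase_covers_def by simp
  have "dominated_at s s' a b (max (time a) (time b))" using S unfolding synced_def by simp
  then have "dominated_at s s' a b (time (step s a))"
    using dominated_at_later[OF W _ _ _ T2 covers] by simp
  moreover have "time b \<le> time (step s a)" using T2 by simp
  ultimately have "dominated_at s s' (step s a) b (time (step s a))"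
    by (rule dominated_at_step_base[OF W A _ _ before])
  moreover have "phase_covers s (step s a) (time (step s a))"
    using time_le_step[OF valid_step[OF W(1)]] unfolding phase_covers_def by auto
  moreover have "phase_covers s' b (time (step s a))" using before unfolding phase_covers_def by auto
  moreover have "max (time (step s a)) (time b) = time (step s a)" using T2 by auto
  ultimately show ?thesis unfolding synced_def by simp
qed

lemma synced_catch_up:
  assumes "valid b" "synced s s' (run s k) b"
  shows "\<exists>k'. synced s s' (run s k') b \<and> phase_covers s (run s k') (time (step s' b))"
  using assms(2)
proof (induction "Suc (2 * card V) - k" arbitrary: k)
  case 0
  then have "active_comps s (run s k) = {}" by (intro run_terminates) simp
  then show ?case using 0 unfolding phase_covers_def by (intro exI[of _ k]) simp
next
  case (Suc n)
  show ?case
  proof (cases "phase_covers s (run s k) (time (step s' b))")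
    case False
    then have A: "active_comps s (run s k) \<noteq> {}"
      and before: "time (step s (run s k)) < time (step s' b)"
      unfolding phase_covers_def by auto
    have "n = Suc (2 * card V) - Suc k" using Suc.hyps(2) by simp
    moreover have "synced s s' (run s (Suc k)) b"
      unfolding run_Suc using synced_step_base[OF valid_run assms(1) Suc.prems A] before by simp
    ultimately show ?thesis by (rule Suc.hyps(1))
  qed (use Suc.prems in \<open>intro exI[of _ k] conjI\<close>)
qed

lemma synced_exists: "\<exists>k. synced s s' (run s k) (run s' j)"
proof (induction j)
  case 0
  show ?case using synced_init run_0 by metis
next
  case (Suc j)
  then obtain k where S: "synced s s' (run s k) (run s' j)" by blast
  show ?case
  proof (cases "active_comps s' (run s' j) = {}")
    case True
    then show ?thesis using S by (metis run_Suc step_inactive)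
  next
    case False
    obtain k' where S': "synced s s' (run s k') (run s' j)"
      and covers: "phase_covers s (run s k') (time (step s' (run s' j)))"
      using synced_catch_up[OF valid_run S] by blast
    show ?thesis
      unfolding run_Suc using synced_step_boosted[OF valid_run valid_run S' False covers] by (rule exI)
  qed
qed

lemma ybase_boosted_le:
  assumes N: "2 * card V < N"
  shows "ybase (run s' N) \<le> ybase (run s N)"
proof -
  obtain k where S: "synced s s' (run s k) (run s' N)" using synced_exists by blast
  define a where "a = run s k"
  define b where "b = run s' N"
  define T where "T = max (time a) (time b)"
  have "ybase b = base_at b (time b)" by (simp add: base_at_time)
  also have "\<dots> \<le> base_at b T" unfolding T_def by (intro base_at_mono) auto
  also have "\<dots> \<le> base_at a T" using S unfolding synced_def dominated_at_def T_def a_def b_def by simp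
  also have "\<dots> \<le> ybase (run s N)"
  proof (cases "active_comps s a = {}")
    case True
    then show ?thesis
      using base_at_stopped[OF t_le valid_run] ybase_run_le_final[OF N] unfolding a_def by simp
  next
    case False
    have "T \<le> time (step s a)" using S False unfolding synced_def phase_covers_def T_def a_def b_def by auto
    then have "base_at a T \<le> base_at a (time (step s a))" unfolding T_def by (intro base_at_mono) auto
    also have "\<dots> = ybase (run s (Suc k))"
      unfolding run_Suc a_def using ybase_step[OF t_le valid_run False[unfolded a_def]] by simp
    also have "\<dots> \<le> ybase (run s N)" by (rule ybase_run_le_final[OF N])
    finally show ?thesis .
  qed
  finally show ?thesis unfolding b_def .
qed

end

end

theorem mainTheorem13:
  fixes V :: "'v set" and E :: "'v set set" and c :: "'v set \<Rightarrow> real"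
    and t ts :: "'v \<Rightarrow> real" and q :: 'v and \<tau> :: real
  assumes "boosted_instance V E c t ts"
    and "q \<in> V"
    and "\<tau> \<ge> ts q"
  shows "Win V E c t ts q \<tau> \<ge> 0"
proof -
  have graph: "graph_ok V E c" and t_le: "\<forall>v\<in>V. t v \<le> ts v"
    using assms(1) unfolding boosted_instance_def by auto
  interpret moat_growing V E c t using graph by unfold_locales
  have s_le: "\<forall>v\<in>V. ts v \<le> with_boost ts q \<tau> v" using assms(3) unfolding with_boost_def by auto
  have "ybase (run (with_boost ts q \<tau>) (4 * card V + 4)) \<le> ybase (run ts (4 * card V + 4))"
    by (rule ybase_boosted_le[OF t_le s_le]) simp
  then show ?thesis unfolding Win_def y_base_def mg_run_def run_def by simp
qed

end
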